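(* Let $A\subset\mathbb{R}^d$ be a convex polytope with nonempty interior and $G$ a subfacet of $A$; let $F_1,F_2$ be the two facets of $A$ meeting at $G$ and $H_1^-,H_2^-$ the support halfspaces of $A$ at $F_1,F_2$. For $\delta>0$ let $Q_\delta=(G+S_\delta)\cap H_1^-\cap H_2^-$, where $S_\delta$ is the closed $2$-dimensional ball of radius $\delta$ centered at the origin lying in the orthogonal complement of the linear subspace parallel to $\operatorname{aff}(G)$. Let $\mu$ be a positive finite Borel measure supported on $G-G$ such that $\mathbf{1}_G\ast\mu\ge1$ almost everywhere on $G$ with respect to $(d-2)$-dimensional volume measure. Then for every $\eta>0$, $m\{x\in Q_\delta:(\mathbf{1}_A\ast\mu)(x)<1-\eta\}=o(m(Q_\delta))$ as $\delta\to0$.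
   Context: A facet is a $(d-1)$-dimensional face, a subfacet a $(d-2)$-dimensional face; each subfacet lies in exactly two facets. $\operatorname{aff}(G)$ is the affine hull, $m$ Lebesgue measure, $G-G=\{a-b:a,b\in G\}$, and $(\mathbf{1}_G\ast\mu)(x)=\mu(\{t:x-t\in G\})$. *)

theory Defs
  imports "HOL-Analysis.Analysis" "HOL-Library.Landau_Symbols"
begin

definition subfacet_of :: "'a::euclidean_space set \<Rightarrow> 'a set \<Rightarrow> bool"
  where "subfacet_of G S \<longleftrightarrow> G face_of S \<and> G \<noteq> {} \<and> aff_dim G = aff_dim S - 2"

definition support_halfspace_at :: "'a::euclidean_space set \<Rightarrow> 'a set \<Rightarrow> 'a set \<Rightarrow> bool"
  where "support_halfspace_at S F H \<longleftrightarrow>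
     (\<exists>a b. a \<noteq> 0 \<and> H = {x. a \<bullet> x \<le> b} \<and> S \<subseteq> H \<and> F \<subseteq> {x. a \<bullet> x = b})"

definition diff_set :: "'a::ab_group_add set \<Rightarrow> 'a set"
  where "diff_set G = {a - b | a b. a \<in> G \<and> b \<in> G}"

definition msum :: "'a::ab_group_add set \<Rightarrow> 'a set \<Rightarrow> 'a set"
  where "msum X Y = {x + y | x y. x \<in> X \<and> y \<in> Y}"

definition orth_disc :: "'a::euclidean_space set \<Rightarrow> real \<Rightarrow> 'a set"
  where "orth_disc G r = {v. norm v \<le> r \<and> (\<forall>u \<in> span (diff_set G). orthogonal v u)}"

text \<open>(1_G * mu)(x) = mu {t. x - t \<in> G}.\<close>
definition conv_ind :: "'a::euclidean_space set \<Rightarrow> 'a measure \<Rightarrow> 'a \<Rightarrow> real"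
  where "conv_ind G \<mu> x = measure \<mu> {t. x - t \<in> G}"

text \<open>A subset N of a (d-2)-dimensional flat aff(G) is null for the (d-2)-dimensional
  volume measure on aff(G) iff its cylinder N + (unit disc orthogonal to the flat)
  is Lebesgue-null in R^d (Fubini: the d-dimensional measure of the cylinder is pi times
  the (d-2)-dimensional measure of N).\<close>
definition flat_null :: "'a::euclidean_space set \<Rightarrow> 'a set \<Rightarrow> bool"
  where "flat_null G N \<longleftrightarrow> N \<subseteq> affine hull G \<and> msum N (orth_disc G 1) \<in> null_sets lebesgue"

end

theory Submission
  imports Defs
begin

(* Write Q_r = G + W_r, where W_r is the planar wedge of vectors of length at most r normal to aff(G)
   that point into both support halfspaces. The affine map T_d fixing aff(G) pointwise and
   multiplying normal components by d maps Q_1 onto Q_d and multiplies Lebesgue measure by a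
   constant, so it suffices to find sets E_d in Q_1 with m(E_d) -> 0 whose images under T_d contain
   the bad points of Q_d.
   Near a relative interior point of G the polytope A looks like the wedge cut out by its two
   facets, so every z in Q_1 outside the null set Z = (rel_frontier G) + W_1 satisfies T_d z in A
   for all small d. Writing z = g + w, translation by any t with g - t in G commutes with T_d, whence
   (1_G * mu)(g) <= (1_A * mu)(T_d z) + mu {t. z - t in Q_1, T_d (z - t) not in A}. As d -> 0 the
   last term decreases to at most mu {t. z - t in Z}, which vanishes for almost every z by Fubini,
   and the hypothesis on 1_G * mu controls the left-hand side. *)

section \<open>Translations and linear images of Lebesgue measure\<close>

lemma nn_integral_lborel_translate:
  fixes c :: "'a::euclidean_space"
  assumes "f \<in> borel_measurable borel"
  shows "(\<integral>\<^sup>+x. f (c + x) \<partial>lborel) = (\<integral>\<^sup>+x. f x \<partial>lborel)"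
proof -
  have "(\<integral>\<^sup>+x. f x \<partial>distr lborel borel ((+) c)) = (\<integral>\<^sup>+x. f (c + x) \<partial>lborel)"
    using assms by (intro nn_integral_distr) auto
  then show ?thesis
    by (simp add: lborel_distr_plus)
qed

lemma emeasure_lborel_translate:
  fixes c :: "'a::euclidean_space"
  assumes "S \<in> sets borel"
  shows "emeasure lborel {x. c + x \<in> S} = emeasure lborel S"
proof -
  have "emeasure (distr lborel borel ((+) c)) S = emeasure lborel ((+) c -` S \<inter> space lborel)"
    using assms by (intro emeasure_distr) auto
  then show ?thesis
    by (simp add: lborel_distr_plus vimage_def)
qed

lemma linear_vimage_in_sets_borel:
  fixes h :: "'a::euclidean_space \<Rightarrow> 'b::euclidean_space"
  assumes "linear h" "S \<in> sets borel"
  shows "h -` S \<in> sets borel"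
proof -
  have "h \<in> borel_measurable borel"
    using assms(1) by (simp add: borel_measurable_continuous_onI linear_continuous_on linear_linear)
  from measurable_sets[OF this assms(2)] show ?thesis
    by simp
qed

lemma nn_integral_indicator_translate_linear:
  fixes h :: "'a::euclidean_space \<Rightarrow> 'a"
  assumes "linear h" "surj h" "S \<in> sets borel"
  shows "(\<integral>\<^sup>+z. indicator S (x + h z) \<partial>lborel) = emeasure lborel (h -` S)"
proof -
  obtain y where "x = h y"
    using assms(2) by blast
  then have "(\<integral>\<^sup>+z. indicator S (x + h z) \<partial>lborel) = (\<integral>\<^sup>+z. indicator (h -` S) (y + z) \<partial>lborel)"
    using assms(1) by (simp add: linear_add indicator_def)
  also have "\<dots> = (\<integral>\<^sup>+z. indicator (h -` S) z \<partial>lborel)"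
    using linear_vimage_in_sets_borel[OF assms(1,3)] by (intro nn_integral_lborel_translate) simp
  also have "\<dots> = emeasure lborel (h -` S)"
    using linear_vimage_in_sets_borel[OF assms(1,3)] by simp
  finally show ?thesis .
qed

lemma emeasure_lborel_linear_vimage_swap:
  fixes h :: "'a::euclidean_space \<Rightarrow> 'a"
  assumes "linear h" "surj h" and [measurable]: "S \<in> sets borel" "B \<in> sets borel"
    and symmetric: "\<And>x. - x \<in> B \<longleftrightarrow> x \<in> B"
  shows "emeasure lborel B * emeasure lborel (h -` S) = emeasure lborel S * emeasure lborel (h -` B)"
proof -
  have [measurable]: "h \<in> borel_measurable borel"
    using assms(1) by (simp add: borel_measurable_continuous_onI linear_continuous_on linear_linear)
  \<comment> \<open>Integrate \<open>indicator B x * indicator S (x + h z)\<close> over \<open>x\<close> and \<open>z\<close> in both orders.\<close>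
  have "emeasure lborel B * emeasure lborel (h -` S)
      = (\<integral>\<^sup>+x. indicator B x * (\<integral>\<^sup>+z. indicator S (x + h z) \<partial>lborel) \<partial>lborel)"
    by (simp add: nn_integral_indicator_translate_linear[OF assms(1-3)] nn_integral_multc)
  also have "\<dots> = (\<integral>\<^sup>+x. \<integral>\<^sup>+z. indicator B x * indicator S (x + h z) \<partial>lborel \<partial>lborel)"
    by (intro nn_integral_cong nn_integral_cmult[symmetric]) measurable
  also have "\<dots> = (\<integral>\<^sup>+z. \<integral>\<^sup>+x. indicator B x * indicator S (x + h z) \<partial>lborel \<partial>lborel)"
    by (rule lborel_pair.Fubini'[symmetric]) measurable
  also have "\<dots> = (\<integral>\<^sup>+z. \<integral>\<^sup>+u. indicator B (- h z + u) * indicator S u \<partial>lborel \<partial>lborel)"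
  proof (rule nn_integral_cong)
    fix z
    show "(\<integral>\<^sup>+x. indicator B x * indicator S (x + h z) \<partial>lborel)
        = (\<integral>\<^sup>+u. indicator B (- h z + u) * indicator S u \<partial>lborel)"
      using nn_integral_lborel_translate[of "\<lambda>u. indicator B (- h z + u) * indicator S u" "h z"]
      by (simp add: add.commute)
  qed
  also have "\<dots> = (\<integral>\<^sup>+u. \<integral>\<^sup>+z. indicator B (- h z + u) * indicator S u \<partial>lborel \<partial>lborel)"
    by (rule lborel_pair.Fubini') measurable
  also have "\<dots> = (\<integral>\<^sup>+u. \<integral>\<^sup>+z. indicator B (- u + h z) * indicator S u \<partial>lborel \<partial>lborel)"
  proof -
    have "indicator B (- h z + u) = (indicator B (- u + h z) :: ennreal)" for u z
      using symmetric[of "- u + h z"] by (simp add: indicator_def)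
    then show ?thesis
      by simp
  qed
  also have "\<dots> = (\<integral>\<^sup>+u. indicator S u * (\<integral>\<^sup>+z. indicator B (- u + h z) \<partial>lborel) \<partial>lborel)"
    by (subst nn_integral_cmult[symmetric]) (measurable, simp add: mult.commute)
  also have "\<dots> = emeasure lborel S * emeasure lborel (h -` B)"
    by (simp only: nn_integral_indicator_translate_linear[OF assms(1,2,4)]) (simp add: nn_integral_multc)
  finally show ?thesis .
qed

lemma emeasure_lborel_linear_vimage_proportional:
  fixes h :: "'a::euclidean_space \<Rightarrow> 'a"
  assumes "linear h" "inj h"
  obtains k where "\<And>S. S \<in> sets borel \<Longrightarrow> emeasure lborel (h -` S) = k * emeasure lborel S"
proof -
  define B :: "'a set" where "B = ball 0 1"
  have B: "B \<in> sets borel" "\<And>x. - x \<in> B \<longleftrightarrow> x \<in> B"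
    by (simp_all add: B_def)
  have "emeasure lborel B \<noteq> \<infinity>"
    using emeasure_lborel_ball_finite[of "0::'a" 1] by (simp add: B_def)
  moreover have "emeasure lborel B \<noteq> 0"
    using content_ball_pos[of 1 "0::'a"] calculation by (simp add: B_def emeasure_eq_ennreal_measure)
  moreover have "surj h"
    using assms by (rule linear_inj_imp_surj)
  ultimately have "emeasure lborel (h -` S) = emeasure lborel (h -` B) / emeasure lborel B * emeasure lborel S"
    if "S \<in> sets borel" for S
  proof -
    have "emeasure lborel (h -` S) = emeasure lborel (h -` S) * emeasure lborel B / emeasure lborel B"
      using \<open>emeasure lborel B \<noteq> 0\<close> \<open>emeasure lborel B \<noteq> \<infinity>\<close> by (simp add: ennreal_mult_divide_eq)
    also have "\<dots> = emeasure lborel B * emeasure lborel (h -` S) / emeasure lborel B"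
      by (simp only: mult.commute)
    also have "\<dots> = emeasure lborel (h -` B) / emeasure lborel B * emeasure lborel S"
      using emeasure_lborel_linear_vimage_swap[OF assms(1) \<open>surj h\<close> that B]
      by (simp add: ennreal_times_divide mult.commute)
    finally show ?thesis .
  qed
  then show ?thesis
    using that by blast
qed

section \<open>Translates of sets under a finite Borel measure\<close>

lemma sets_pair_measure_eq_borel:
  fixes M N :: "'a::euclidean_space measure"
  assumes "sets N = sets borel" "sets M = sets borel"
  shows "sets (N \<Otimes>\<^sub>M M) = sets (borel :: ('a \<times> 'a) measure)"
proof -
  have "sets (N \<Otimes>\<^sub>M M) = sets (borel \<Otimes>\<^sub>M (borel :: 'a measure))"
    by (rule sets_pair_measure_cong) (simp_all add: assms)
  then show ?thesis
    by (simp only: borel_prod)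
qed

lemma translate_vimage_in_sets:
  fixes M :: "'a::euclidean_space measure"
  assumes "sets M = sets borel" "S \<in> sets borel"
  shows "{t. x - t \<in> S} \<in> sets M"
  using assms(2) unfolding assms(1) by measurable

lemma borel_measurable_emeasure_translate_vimage:
  fixes M :: "'a::euclidean_space measure"
  assumes "sigma_finite_measure M" "sets M = sets borel" "S \<in> sets borel"
  shows "(\<lambda>x. emeasure M {t. x - t \<in> S}) \<in> borel_measurable borel"
proof -
  interpret pair_sigma_finite lborel M
    using assms(1) by (simp add: pair_sigma_finite_def lborel.sigma_finite_measure_axioms)
  have "(\<lambda>p. fst p - snd p) \<in> borel_measurable (borel :: ('a \<times> 'a) measure)"
    by (intro borel_measurable_continuous_onI continuous_intros)
  from measurable_sets[OF this assms(3)]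
  have "{p. fst p - snd p \<in> S} \<in> sets (borel :: ('a \<times> 'a) measure)"
    by (simp add: vimage_def)
  then have "(\<lambda>x. emeasure M (Pair x -` {p. fst p - snd p \<in> S})) \<in> borel_measurable lborel"
    by (intro sigma_finite_measure.measurable_emeasure_Pair[OF assms(1)])
      (simp add: sets_pair_measure_eq_borel assms(2))
  then show ?thesis
    by (simp add: vimage_def)
qed

lemma AE_emeasure_translate_vimage_null:
  fixes M :: "'a::euclidean_space measure"
  assumes "sigma_finite_measure M" "sets M = sets borel" "Z \<in> null_sets lborel"
  shows "AE x in lborel. emeasure M {t. x - t \<in> Z} = 0"
proof -
  interpret pair_sigma_finite lborel M
    using assms(1) by (simp add: pair_sigma_finite_def lborel.sigma_finite_measure_axioms)
  have Z[measurable]: "Z \<in> sets borel"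
    using assms(3) by (simp add: null_sets_def)
  have "(\<lambda>p. fst p - snd p) \<in> borel_measurable (borel :: ('a \<times> 'a) measure)"
    by (intro borel_measurable_continuous_onI continuous_intros)
  then have [measurable]: "(\<lambda>(x, t). indicator Z (x - t) :: ennreal) \<in> borel_measurable (lborel \<Otimes>\<^sub>M M)"
    unfolding measurable_cong_sets[OF sets_pair_measure_eq_borel[OF sets_lborel assms(2)] refl] split_beta'
    by measurable
  have "(\<integral>\<^sup>+x. emeasure M {t. x - t \<in> Z} \<partial>lborel) = (\<integral>\<^sup>+x. \<integral>\<^sup>+t. indicator Z (x - t) \<partial>M \<partial>lborel)"
    using translate_vimage_in_sets[OF assms(2) Z]
    by (intro nn_integral_cong) (auto simp: nn_integral_indicator[symmetric] indicator_def)
  also have "\<dots> = (\<integral>\<^sup>+t. \<integral>\<^sup>+x. indicator Z (- t + x) \<partial>lborel \<partial>M)"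
    by (subst Fubini') simp_all
  also have "\<dots> = (\<integral>\<^sup>+t. emeasure lborel Z \<partial>M)"
  proof (rule nn_integral_cong)
    fix t
    show "(\<integral>\<^sup>+x. indicator Z (- t + x) \<partial>lborel) = emeasure lborel Z"
      using nn_integral_lborel_translate[of "indicator Z" "- t"] Z by simp
  qed
  also have "\<dots> = 0"
    using assms(3) by (simp add: null_sets_def)
  finally show ?thesis
    using borel_measurable_emeasure_translate_vimage[OF assms(1,2) Z]
    by (subst nn_integral_0_iff_AE[symmetric]) simp_all
qed

lemma tendsto_emeasure_antimono_at_right_0:
  fixes S :: "real \<Rightarrow> 'a set"
  assumes sets: "\<And>\<delta>. 0 < \<delta> \<Longrightarrow> S \<delta> \<in> sets M"
    and mono: "\<And>\<delta> \<delta>'. 0 < \<delta>' \<Longrightarrow> \<delta>' \<le> \<delta> \<Longrightarrow> S \<delta>' \<subseteq> S \<delta>"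
    and finite: "\<And>\<delta>. 0 < \<delta> \<Longrightarrow> emeasure M (S \<delta>) \<noteq> \<infinity>"
  shows "((\<lambda>\<delta>. emeasure M (S \<delta>)) \<longlongrightarrow> emeasure M (\<Inter>\<delta>\<in>{0<..}. S \<delta>)) (at_right 0)"
proof (rule tendsto_at_right_sequentially[of 0 1])
  fix s :: "nat \<Rightarrow> real"
  assume pos: "\<And>n. 0 < s n" and "decseq s" and "s \<longlonglongrightarrow> 0"
  have "(\<Inter>n. S (s n)) \<subseteq> S \<delta>" if \<delta>: "0 < \<delta>" for \<delta>
  proof -
    obtain n where "s n < \<delta>"
      using order_tendstoD(2)[OF \<open>s \<longlonglongrightarrow> 0\<close> \<delta>] by (auto simp: eventually_sequentially)
    then show ?thesis
      using mono[OF pos, of n \<delta>] by auto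
  qed
  then have "(\<Inter>n. S (s n)) = (\<Inter>\<delta>\<in>{0<..}. S \<delta>)"
    using pos by auto
  moreover have "(\<lambda>n. emeasure M (S (s n))) \<longlonglongrightarrow> emeasure M (\<Inter>n. S (s n))"
  proof (rule Lim_emeasure_decseq)
    show "decseq (\<lambda>n. S (s n))"
      unfolding decseq_def using \<open>decseq s\<close> pos by (metis decseqD mono)
  qed (use pos sets finite in auto)
  ultimately show "(\<lambda>n. emeasure M (S (s n))) \<longlonglongrightarrow> emeasure M (\<Inter>\<delta>\<in>{0<..}. S \<delta>)"
    by simp
qed simp

lemma AE_eventually_translate_measure_less:
  fixes M :: "'a::euclidean_space measure" and S :: "real \<Rightarrow> 'a set"
  assumes "finite_measure M" "sets M = sets borel"
    and sets: "\<And>\<delta>. 0 < \<delta> \<Longrightarrow> S \<delta> \<in> sets borel"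
    and mono: "\<And>\<delta> \<delta>'. 0 < \<delta>' \<Longrightarrow> \<delta>' \<le> \<delta> \<Longrightarrow> S \<delta>' \<subseteq> S \<delta>"
    and Z: "Z \<in> null_sets lborel" "(\<Inter>\<delta>\<in>{0<..}. S \<delta>) \<subseteq> Z" and "0 < \<eta>"
  shows "AE x in lborel. \<forall>\<^sub>F \<delta> in at_right 0. measure M {t. x - t \<in> S \<delta>} < \<eta>"
  using AE_emeasure_translate_vimage_null[OF finite_measure.axioms(1)[OF assms(1)] assms(2) Z(1)]
proof eventually_elim
  case (elim x)
  interpret finite_measure M
    by (rule assms(1))
  have "((\<lambda>\<delta>. emeasure M {t. x - t \<in> S \<delta>}) \<longlongrightarrow> emeasure M (\<Inter>\<delta>\<in>{0<..}. {t. x - t \<in> S \<delta>})) (at_right 0)"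
    using sets mono
    by (intro tendsto_emeasure_antimono_at_right_0) (auto intro: translate_vimage_in_sets[OF assms(2)])
  moreover have "emeasure M (\<Inter>\<delta>\<in>{0<..}. {t. x - t \<in> S \<delta>}) \<le> emeasure M {t. x - t \<in> Z}"
    using Z by (intro emeasure_mono translate_vimage_in_sets[OF assms(2)]) (auto simp: null_sets_def)
  ultimately have "\<forall>\<^sub>F \<delta> in at_right 0. emeasure M {t. x - t \<in> S \<delta>} < ennreal \<eta>"
    using elim \<open>0 < \<eta>\<close> by (intro order_tendstoD(2)) auto
  then show ?case
    by eventually_elim (simp add: emeasure_eq_measure ennreal_less_iff)
qed

section \<open>Rescaled sets of vanishing relative measure\<close>

lemma measure_le_of_emeasure_image_scaling:
  fixes T :: "'a::euclidean_space \<Rightarrow> 'a"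
  assumes scale: "\<And>S. S \<in> sets borel \<Longrightarrow> T ` S \<in> sets borel \<and> emeasure lborel (T ` S) = k * emeasure lborel S"
    and Q: "Q \<in> sets borel" "emeasure lborel (T ` Q) \<noteq> \<infinity>"
    and E: "E \<in> sets borel" "E \<subseteq> Q" "emeasure lborel E \<le> c * emeasure lborel Q"
    and "B \<subseteq> T ` E" "0 \<le> c"
  shows "measure lebesgue B \<le> c * measure lebesgue (T ` Q)"
proof -
  have TE: "T ` E \<in> sets borel" "T ` E \<subseteq> T ` Q" "T ` Q \<in> sets borel"
    using scale E Q by auto
  have finite: "emeasure lborel (T ` E) \<noteq> \<infinity>"
    using emeasure_mono[OF TE(2), of lborel] TE(3) Q(2) by (auto simp: top.not_eq_extremum)
  have "emeasure lborel (T ` E) = k * emeasure lborel E"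
    using scale E by blast
  also have "\<dots> \<le> k * (c * emeasure lborel Q)"
    using E by (intro mult_left_mono) auto
  also have "\<dots> = c * emeasure lborel (T ` Q)"
    using scale Q by (simp add: ac_simps)
  finally have "ennreal (measure lborel (T ` E)) \<le> ennreal (c * measure lborel (T ` Q))"
    using finite Q(2) \<open>0 \<le> c\<close> by (simp add: emeasure_eq_ennreal_measure ennreal_mult)
  then have "measure lborel (T ` E) \<le> c * measure lborel (T ` Q)"
    using \<open>0 \<le> c\<close> by (simp add: ennreal_le_iff)
  moreover have "measure lebesgue B \<le> measure lebesgue (T ` E)"
  proof (cases "B \<in> sets lebesgue")
    case True
    then show ?thesis
      using \<open>B \<subseteq> T ` E\<close> TE(1) finite
      by (intro measure_mono_fmeasurable) (auto simp: fmeasurable_def top.not_eq_extremum)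
  qed (simp add: measure_notin_sets)
  ultimately show ?thesis
    using TE by simp
qed

lemma small_o_measure_image_of_vanishing:
  fixes T :: "real \<Rightarrow> 'a::euclidean_space \<Rightarrow> 'a" and Q E B :: "real \<Rightarrow> 'a set"
  assumes Q1: "Q 1 \<in> sets borel"
    and finite: "\<And>\<delta>. 0 < \<delta> \<Longrightarrow> emeasure lborel (Q \<delta>) \<noteq> \<infinity>"
    and image: "\<And>\<delta>. 0 < \<delta> \<Longrightarrow> Q \<delta> = T \<delta> ` Q 1"
    and scale: "\<And>\<delta>. 0 < \<delta> \<Longrightarrow> \<exists>k. \<forall>S\<in>sets borel.
                  T \<delta> ` S \<in> sets borel \<and> emeasure lborel (T \<delta> ` S) = k * emeasure lborel S"
    and E: "\<And>\<delta>. 0 < \<delta> \<Longrightarrow> E \<delta> \<in> sets borel" "\<And>\<delta>. 0 < \<delta> \<Longrightarrow> E \<delta> \<subseteq> Q 1"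
    and vanish: "((\<lambda>\<delta>. emeasure lborel (E \<delta>)) \<longlongrightarrow> 0) (at_right 0)"
    and B: "\<And>\<delta>. 0 < \<delta> \<Longrightarrow> B \<delta> \<subseteq> T \<delta> ` E \<delta>"
  shows "(\<lambda>\<delta>. measure lebesgue (B \<delta>)) \<in> o[at_right 0](\<lambda>\<delta>. measure lebesgue (Q \<delta>))"
proof (rule landau_o.smallI)
  fix c :: real
  assume "0 < c"
  have "\<forall>\<^sub>F \<delta> in at_right 0. emeasure lborel (E \<delta>) \<le> c * emeasure lborel (Q 1)"
  proof (cases "emeasure lborel (Q 1) = 0")
    case True
    have "\<forall>\<^sub>F \<delta> in at_right 0. emeasure lborel (E \<delta>) \<le> emeasure lborel (Q 1)"
      using E Q1 by (auto simp: eventually_at_right_field intro!: emeasure_mono exI[of _ 1])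
    with True show ?thesis
      by simp
  next
    case False
    then have "0 < ennreal c * emeasure lborel (Q 1)"
      using \<open>0 < c\<close> by (simp add: ennreal_zero_less_mult_iff zero_less_iff_neq_zero)
    from order_tendstoD(2)[OF vanish this] show ?thesis
      by eventually_elim simp
  qed
  moreover have "\<forall>\<^sub>F \<delta> in at_right 0. (0::real) < \<delta>"
    by (simp add: eventually_at_right_less)
  ultimately show "\<forall>\<^sub>F \<delta> in at_right 0. norm (measure lebesgue (B \<delta>)) \<le> c * norm (measure lebesgue (Q \<delta>))"
  proof eventually_elim
    case (elim \<delta>)
    obtain k where "\<And>S. S \<in> sets borel \<Longrightarrow> T \<delta> ` S \<in> sets borel \<and> emeasure lborel (T \<delta> ` S) = k * emeasure lborel S"
      using scale[OF elim(2)] by blast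
    from measure_le_of_emeasure_image_scaling[OF this Q1 _ E[OF elim(2)] elim(1) B[OF elim(2)]]
    show ?case
      using finite[OF elim(2)] image[OF elim(2)] \<open>0 < c\<close> by simp
  qed
qed

section \<open>Orthogonal projection and stretching normal to a subspace\<close>

definition orth_proj :: "'a::euclidean_space set \<Rightarrow> 'a \<Rightarrow> 'a"
  where "orth_proj V x = (SOME p. p \<in> V \<and> x - p \<in> V\<^sup>\<bottom>)"

lemma orth_proj_mem:
  assumes "subspace V"
  shows "orth_proj V x \<in> V" "x - orth_proj V x \<in> V\<^sup>\<bottom>"
proof -
  obtain y z where y: "y \<in> span V" and z: "\<And>w. w \<in> span V \<Longrightarrow> orthogonal z w" and "x = y + z"
    using orthogonal_subspace_decomp_exists[of V x] by blast
  have "y \<in> V"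
    using y by (simp add: span_eq_iff[THEN iffD2, OF assms])
  moreover have "z \<in> V\<^sup>\<bottom>"
    unfolding orthogonal_comp_def using z span_base orthogonal_commute by blast
  ultimately have "\<exists>p. p \<in> V \<and> x - p \<in> V\<^sup>\<bottom>"
    using \<open>x = y + z\<close> by (intro exI[of _ y]) simp
  then have "orth_proj V x \<in> V \<and> x - orth_proj V x \<in> V\<^sup>\<bottom>"
    unfolding orth_proj_def by (rule someI_ex)
  then show "orth_proj V x \<in> V" "x - orth_proj V x \<in> V\<^sup>\<bottom>"
    by auto
qed

lemma orth_proj_unique:
  assumes "subspace V" "p \<in> V" "x - p \<in> V\<^sup>\<bottom>"
  shows "orth_proj V x = p"
proof -
  have "p - orth_proj V x \<in> V"
    using assms orth_proj_mem(1)[OF assms(1)] by (simp add: subspace_diff)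
  moreover have "(x - orth_proj V x) - (x - p) \<in> V\<^sup>\<bottom>"
    by (rule subspace_diff[OF subspace_orthogonal_comp orth_proj_mem(2)[OF assms(1)] assms(3)])
  then have "p - orth_proj V x \<in> V\<^sup>\<bottom>"
    by simp
  ultimately have "p - orth_proj V x \<in> V \<inter> V\<^sup>\<bottom>"
    by blast
  then show ?thesis
    using orthogonal_Int_0[OF assms(1)] by simp
qed

lemma orth_proj_add_orthogonal:
  assumes "subspace V" "v \<in> V" "w \<in> V\<^sup>\<bottom>"
  shows "orth_proj V (v + w) = v"
  using assms by (intro orth_proj_unique) simp_all

lemma linear_orth_proj:
  assumes "subspace V"
  shows "linear (orth_proj V)"
proof (rule linearI)
  fix x y :: 'a and r :: real
  have "(x - orth_proj V x) + (y - orth_proj V y) \<in> V\<^sup>\<bottom>"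
    by (intro subspace_add[OF subspace_orthogonal_comp] orth_proj_mem(2)[OF assms])
  then show "orth_proj V (x + y) = orth_proj V x + orth_proj V y"
    using orth_proj_mem(1)[OF assms]
    by (intro orth_proj_unique[OF assms] subspace_add[OF assms]) (simp_all add: algebra_simps)
  have "r *\<^sub>R (x - orth_proj V x) \<in> V\<^sup>\<bottom>"
    by (intro subspace_scale[OF subspace_orthogonal_comp] orth_proj_mem(2)[OF assms])
  then show "orth_proj V (r *\<^sub>R x) = r *\<^sub>R orth_proj V x"
    using orth_proj_mem(1)[OF assms]
    by (intro orth_proj_unique[OF assms] subspace_scale[OF assms]) (simp_all add: algebra_simps)
qed

definition normal_stretch :: "'a::euclidean_space set \<Rightarrow> 'a \<Rightarrow> real \<Rightarrow> 'a \<Rightarrow> 'a"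
  where "normal_stretch V c \<delta> x = c + orth_proj V (x - c) + \<delta> *\<^sub>R (x - c - orth_proj V (x - c))"

lemma normal_stretch_add:
  assumes "subspace V" "v \<in> V" "w \<in> V\<^sup>\<bottom>"
  shows "normal_stretch V c \<delta> (c + v + w) = c + v + \<delta> *\<^sub>R w"
  using orth_proj_add_orthogonal[OF assms] by (simp add: normal_stretch_def add.assoc)

lemma orth_proj_decomp:
  fixes V :: "'a::euclidean_space set"
  assumes "subspace V"
  obtains v w where "v \<in> V" "w \<in> V\<^sup>\<bottom>" "x = c + v + w"
proof (rule that)
  show "orth_proj V (x - c) \<in> V" "x - c - orth_proj V (x - c) \<in> V\<^sup>\<bottom>"
    using orth_proj_mem[OF assms] by auto
qed simp

lemma normal_stretch_diff:
  assumes "subspace V" "t \<in> V"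
  shows "normal_stretch V c \<delta> (x - t) = normal_stretch V c \<delta> x - t"
proof -
  obtain v w where v: "v \<in> V" and w: "w \<in> V\<^sup>\<bottom>" and x: "x = c + v + w"
    using orth_proj_decomp[OF assms(1)] .
  have xt: "x - t = c + (v - t) + w"
    using x by simp
  have "normal_stretch V c \<delta> (x - t) = c + (v - t) + \<delta> *\<^sub>R w"
    unfolding xt by (rule normal_stretch_add[OF assms(1) subspace_diff[OF assms(1) v assms(2)] w])
  moreover have "normal_stretch V c \<delta> x = c + v + \<delta> *\<^sub>R w"
    using normal_stretch_add[OF assms(1) v w] x by simp
  ultimately show ?thesis
    by simp
qed

lemma normal_stretch_inverse:
  assumes "subspace V" "\<delta> \<noteq> 0"
  shows "normal_stretch V c (1 / \<delta>) (normal_stretch V c \<delta> x) = x"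
proof -
  obtain v w where v: "v \<in> V" and w: "w \<in> V\<^sup>\<bottom>" and x: "x = c + v + w"
    using orth_proj_decomp[OF assms(1)] .
  have "normal_stretch V c \<delta> x = c + v + \<delta> *\<^sub>R w"
    using normal_stretch_add[OF assms(1) v w] x by simp
  moreover have "\<delta> *\<^sub>R w \<in> V\<^sup>\<bottom>"
    using w by (rule subspace_scale[OF subspace_orthogonal_comp])
  ultimately show ?thesis
    using normal_stretch_add[OF assms(1) v] x assms(2) by simp
qed

lemma continuous_normal_stretch:
  assumes "subspace V"
  shows "continuous_on UNIV (normal_stretch V c \<delta>)"
proof -
  have "continuous_on UNIV (orth_proj V)"
    using linear_orth_proj[OF assms] by (simp add: linear_continuous_on linear_linear)
  then have "continuous_on UNIV (\<lambda>x. orth_proj V (x - c))"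
    by (rule continuous_on_compose2) (auto intro: continuous_intros)
  then show ?thesis
    unfolding normal_stretch_def by (intro continuous_intros)
qed

lemma normal_stretch_image_eq_vimage:
  assumes "subspace V" "\<delta> \<noteq> 0"
  shows "normal_stretch V c \<delta> ` S = normal_stretch V c (1 / \<delta>) -` S"
proof -
  have "normal_stretch V c \<delta> (normal_stretch V c (1 / \<delta>) x) = x" for x
    using normal_stretch_inverse[OF assms(1), of "1 / \<delta>"] assms(2) by simp
  with normal_stretch_inverse[OF assms] show ?thesis
    by (auto simp: image_iff) metis
qed

lemma emeasure_normal_stretch_vimage:
  assumes "subspace V" "\<delta> \<noteq> 0"
  obtains k where "\<And>S. S \<in> sets borel \<Longrightarrow> normal_stretch V c \<delta> -` S \<in> sets borel"
    "\<And>S. S \<in> sets borel \<Longrightarrow> emeasure lborel (normal_stretch V c \<delta> -` S) = k * emeasure lborel S"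
proof -
  define L where "L y = orth_proj V y + \<delta> *\<^sub>R (y - orth_proj V y)" for y
  have "linear L"
    unfolding L_def using linear_orth_proj[OF assms(1)]
    by (intro linearI) (simp_all add: linear_add linear_scale algebra_simps)
  have vimage: "normal_stretch V c \<delta> -` S = {x. - c + x \<in> L -` {y. c + y \<in> S}}" for S
    by (auto simp: normal_stretch_def L_def add.assoc)
  have "inj L"
  proof (rule injI)
    fix y z
    assume "L y = L z"
    then have "normal_stretch V c \<delta> (y + c) = normal_stretch V c \<delta> (z + c)"
      by (simp add: normal_stretch_def L_def add.assoc)
    then show "y = z"
      using normal_stretch_inverse[OF assms, of c] by (metis add_right_cancel)
  qed
  then obtain k where k: "\<And>S. S \<in> sets borel \<Longrightarrow> emeasure lborel (L -` S) = k * emeasure lborel S"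
    using emeasure_lborel_linear_vimage_proportional[OF \<open>linear L\<close>] by blast
  show ?thesis
  proof
    fix S :: "'a set"
    assume "S \<in> sets borel"
    have translate: "{x. a + x \<in> X} \<in> sets borel" if "X \<in> sets borel" for a :: 'a and X
      using that by measurable
    have S': "L -` {y. c + y \<in> S} \<in> sets borel"
      by (intro linear_vimage_in_sets_borel[OF \<open>linear L\<close>] translate \<open>S \<in> sets borel\<close>)
    then show "normal_stretch V c \<delta> -` S \<in> sets borel"
      unfolding vimage by (rule translate)
    have "emeasure lborel (normal_stretch V c \<delta> -` S) = emeasure lborel (L -` {y. c + y \<in> S})"
      unfolding vimage using S' by (rule emeasure_lborel_translate)
    also have "\<dots> = k * emeasure lborel S"
      using k[OF translate[OF \<open>S \<in> sets borel\<close>]] emeasure_lborel_translate[OF \<open>S \<in> sets borel\<close>]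
      by simp
    finally show "emeasure lborel (normal_stretch V c \<delta> -` S) = k * emeasure lborel S" .
  qed
qed

section \<open>Faces of a polytope around a subfacet\<close>

lemma span_diff_set_eq:
  assumes "g \<in> G"
  shows "span (diff_set G) = span ((\<lambda>x. x - g) ` G)"
proof (rule span_eq[THEN iffD2], rule conjI)
  show "(\<lambda>x. x - g) ` G \<subseteq> span (diff_set G)"
    using assms by (auto simp: diff_set_def intro!: span_base)
  show "diff_set G \<subseteq> span ((\<lambda>x. x - g) ` G)"
  proof
    fix z
    assume "z \<in> diff_set G"
    then obtain x y where "z = (x - g) - (y - g)" "x \<in> G" "y \<in> G"
      unfolding diff_set_def by auto
    then show "z \<in> span ((\<lambda>x. x - g) ` G)"
      by (metis imageI span_base span_diff)
  qed
qed

lemma aff_dim_eq_dim_span_diff_set: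
  fixes G :: "'a::euclidean_space set"
  assumes "g \<in> G"
  shows "aff_dim G = int (dim (span (diff_set G)))"
  using aff_dim_eq_dim_subtract[OF hull_inc[OF assms]] span_diff_set_eq[OF assms] by (metis dim_span)

lemma add_span_diff_set_in_affine_hull:
  fixes G :: "'a::euclidean_space set"
  assumes "g \<in> G" "v \<in> span (diff_set G)"
  shows "g + v \<in> affine hull G"
proof -
  have "affine hull G = (\<lambda>x. g + x) ` span ((\<lambda>x. - g + x) ` G)"
    using assms(1) by (intro affine_hull_span_gen hull_inc)
  then show ?thesis
    using assms span_diff_set_eq[OF assms(1)] by auto
qed

lemma span_diff_set_orthogonal_normal:
  assumes "\<And>x. x \<in> G \<Longrightarrow> a \<bullet> x = b" "u \<in> span (diff_set G)"
  shows "a \<bullet> u = 0"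
proof -
  have "orthogonal a u"
  proof (rule orthogonal_to_span[OF assms(2)])
    fix y
    assume "y \<in> diff_set G"
    then show "orthogonal a y"
      using assms(1) by (auto simp: diff_set_def orthogonal_def inner_diff_right)
  qed
  then show ?thesis
    by (simp add: orthogonal_def)
qed

lemma dim_orthogonal_comp_span_diff_set:
  fixes G :: "'a::euclidean_space set"
  assumes "G \<noteq> {}"
  shows "int (dim ((span (diff_set G))\<^sup>\<bottom>)) = int DIM('a) - aff_dim G"
proof -
  obtain g where "g \<in> G"
    using assms by blast
  have "dim {y \<in> UNIV. \<forall>x\<in>span (diff_set G). orthogonal x y} + dim (span (diff_set G)) = dim (UNIV :: 'a set)"
    by (intro dim_subspace_orthogonal_to_vectors) auto
  then show ?thesis
    using aff_dim_eq_dim_span_diff_set[OF \<open>g \<in> G\<close>] by (simp add: orthogonal_comp_def)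
qed

lemma facet_eq_Int_supporting_hyperplane:
  fixes A F :: "'a::euclidean_space set"
  assumes "convex A" "interior A \<noteq> {}" "F facet_of A" "a \<noteq> 0"
    and "A \<subseteq> {x. a \<bullet> x \<le> b}" "F \<subseteq> {x. a \<bullet> x = b}"
  shows "F = A \<inter> {x. a \<bullet> x = b}"
proof (rule ccontr)
  define E where "E = A \<inter> {x. a \<bullet> x = b}"
  assume "F \<noteq> E"
  have "E face_of A"
    unfolding E_def using assms(1,5) by (intro face_of_Int_supporting_hyperplane_le) auto
  have F: "F face_of A" "aff_dim F = aff_dim A - 1"
    using assms(3) by (auto simp: facet_of_def)
  have "F \<subseteq> E"
    unfolding E_def using assms(6) face_of_imp_subset[OF F(1)] by blast
  have "\<not> A \<subseteq> {x. a \<bullet> x = b}"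
    using interior_mono[of A "{x. a \<bullet> x = b}"] assms(2,4) by auto
  then have "E \<noteq> A"
    unfolding E_def by blast
  then have "aff_dim E < aff_dim A"
    using face_of_aff_dim_lt[OF assms(1) \<open>E face_of A\<close>] by blast
  moreover have "aff_dim F < aff_dim E"
    using face_of_aff_dim_lt[OF face_of_imp_convex[OF \<open>E face_of A\<close>]]
      face_of_subset[OF F(1) \<open>F \<subseteq> E\<close> face_of_imp_subset[OF \<open>E face_of A\<close>]] \<open>F \<noteq> E\<close>
    by blast
  ultimately show False
    using F(2) by linarith
qed

lemma facets_Int_subset_affine_hull_subfacet:
  fixes A G F1 F2 :: "'a::euclidean_space set"
  assumes "subfacet_of G A" "F1 facet_of A" "F2 facet_of A" "F1 \<noteq> F2" "G \<subseteq> F1" "G \<subseteq> F2"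
  shows "F1 \<inter> F2 \<subseteq> affine hull G"
proof
  fix p
  assume p: "p \<in> F1 \<inter> F2"
  have F1: "F1 face_of A" "aff_dim F1 = aff_dim A - 1" and F2: "F2 face_of A" "aff_dim F2 = aff_dim A - 1"
    using assms(2,3) by (simp_all add: facet_of_def)
  have "F1 \<inter> F2 \<noteq> F1"
  proof
    assume "F1 \<inter> F2 = F1"
    then have "F1 face_of F2"
      using face_of_subset[OF F1(1) _ face_of_imp_subset[OF F2(1)]] by blast
    then have "aff_dim F1 < aff_dim F2"
      using face_of_aff_dim_lt[OF face_of_imp_convex[OF F2(1)]] assms(4) by blast
    then show False
      using F1(2) F2(2) by simp
  qed
  moreover have "(F1 \<inter> F2) face_of F1"
    by (rule face_of_subset[OF face_of_Int[OF F1(1) F2(1)] inf_le1 face_of_imp_subset[OF F1(1)]])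
  ultimately have "aff_dim (F1 \<inter> F2) < aff_dim F1"
    using face_of_aff_dim_lt[OF face_of_imp_convex[OF F1(1)]] by blast
  show "p \<in> affine hull G"
  proof (rule ccontr)
    assume "p \<notin> affine hull G"
    then have "aff_dim (insert p G) = aff_dim G + 1"
      by (simp add: aff_dim_insert)
    moreover have "insert p G \<subseteq> F1 \<inter> F2"
      using p assms(5,6) by blast
    ultimately have "aff_dim G + 1 \<le> aff_dim (F1 \<inter> F2)"
      by (metis aff_dim_subset)
    then show False
      using \<open>aff_dim (F1 \<inter> F2) < aff_dim F1\<close> F1(2) assms(1) by (simp add: subfacet_of_def)
  qed
qed

lemma subfacet_edge_direction:
  fixes A G F1 F2 :: "'a::euclidean_space set"
  assumes "subfacet_of G A"
    and F: "F1 facet_of A" "F2 facet_of A" "F1 \<noteq> F2" "G \<subseteq> F1" "G \<subseteq> F2"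
    and F1: "F1 \<subseteq> {x. a1 \<bullet> x = b1}" and F2: "A \<subseteq> {x. a2 \<bullet> x \<le> b2}" "F2 = A \<inter> {x. a2 \<bullet> x = b2}"
    and "g \<in> G"
  obtains p v e where "p \<in> A" "v \<in> span (diff_set G)" "e \<in> (span (diff_set G))\<^sup>\<bottom>"
    "p = g + v + e" "a1 \<bullet> e = 0" "a2 \<bullet> e < 0"
proof -
  define V where "V = span (diff_set G)"
  have "\<not> F1 \<subseteq> affine hull G"
    using aff_dim_subset[of F1 "affine hull G"] assms(1) F(1)
    by (auto simp: subfacet_of_def facet_of_def)
  then obtain p where p: "p \<in> F1" "p \<notin> affine hull G"
    by blast
  have "p \<in> A"
    using p(1) F(1) by (auto simp: facet_of_def dest: face_of_imp_subset)
  define v where "v = orth_proj V (p - g)"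
  define e where "e = p - g - v"
  have v: "v \<in> V" and e: "e \<in> V\<^sup>\<bottom>"
    using orth_proj_mem[of V "p - g"] by (simp_all add: V_def v_def e_def)
  have "a1 \<bullet> v = 0" "a2 \<bullet> v = 0"
    using v F1 F2(2) F(4,5) unfolding V_def
    by (auto intro!: span_diff_set_orthogonal_normal[of G a1 b1] span_diff_set_orthogonal_normal[of G a2 b2])
  moreover have "a1 \<bullet> p = b1" "a1 \<bullet> g = b1" "a2 \<bullet> g = b2" "a2 \<bullet> p \<le> b2"
    using p(1) \<open>g \<in> G\<close> \<open>p \<in> A\<close> F1 F2 F(4,5) by auto
  ultimately have "a1 \<bullet> e = 0" "a2 \<bullet> e \<le> 0" "a2 \<bullet> e = 0 \<longrightarrow> p \<in> F2"
    using \<open>p \<in> A\<close> F2(2) by (auto simp: e_def inner_diff_right)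
  moreover have "p \<notin> F2"
    using facets_Int_subset_affine_hull_subfacet[OF assms(1) F] p by blast
  ultimately have "a1 \<bullet> e = 0" "a2 \<bullet> e < 0"
    by auto
  moreover have "p = g + v + e"
    by (simp add: e_def)
  ultimately show ?thesis
    using that[OF \<open>p \<in> A\<close>] v e unfolding V_def by blast
qed

lemma planar_wedge_cone_decomp:
  fixes U :: "'a::euclidean_space set"
  assumes "dim U = 2" "e1 \<in> U" "e2 \<in> U" "w \<in> U"
    and e: "a1 \<bullet> e1 = 0" "a2 \<bullet> e1 < 0" "a2 \<bullet> e2 = 0" "a1 \<bullet> e2 < 0"
    and w: "a1 \<bullet> w \<le> 0" "a2 \<bullet> w \<le> 0"
  obtains \<alpha> \<beta> where "0 \<le> \<alpha>" "0 \<le> \<beta>" "w = \<alpha> *\<^sub>R e1 + \<beta> *\<^sub>R e2"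
proof -
  have "e2 \<notin> span {e1}"
    using e by (auto simp: span_singleton)
  moreover have "e1 \<noteq> 0"
    using e(2) by auto
  ultimately have "independent {e2, e1}"
    by (simp add: independent_insert)
  moreover have "e1 \<noteq> e2"
    using e by auto
  then have "card {e2, e1} = dim U"
    using assms(1) by simp
  ultimately have "U \<subseteq> span {e2, e1}"
    using card_eq_dim[of "{e2, e1}" U] assms(2,3) by simp
  then obtain \<alpha> \<beta> where "w - \<beta> *\<^sub>R e2 = \<alpha> *\<^sub>R e1"
    using assms(4) by (auto simp: span_insert span_singleton)
  then have w_eq: "w = \<alpha> *\<^sub>R e1 + \<beta> *\<^sub>R e2"
    by (simp add: diff_eq_eq)
  have "a1 \<bullet> w = \<beta> * (a1 \<bullet> e2)" "a2 \<bullet> w = \<alpha> * (a2 \<bullet> e1)"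
    using e by (simp_all add: w_eq inner_add_right)
  then have "0 \<le> \<alpha>" "0 \<le> \<beta>"
    using e w by (simp_all add: mult_le_0_iff)
  then show ?thesis
    using that w_eq by blast
qed

lemma rel_interior_push_into_convex:
  fixes A G :: "'a::euclidean_space set"
  assumes "convex A" "G \<subseteq> A" "g \<in> rel_interior G" "g + v + w \<in> A" "v \<in> span (diff_set G)"
  shows "\<exists>\<delta>>0. g + \<delta> *\<^sub>R w \<in> A"
proof -
  obtain \<epsilon> where "\<epsilon> > 0" and \<epsilon>: "ball g \<epsilon> \<inter> affine hull G \<subseteq> G"
    using assms(3) mem_rel_interior_ball by blast
  \<comment> \<open>Move \<open>g\<close> back to \<open>g - s v \<in> G\<close>; the segment from there to \<open>g + v + w\<close> passes through
    \<open>g + (s / (1 + s)) w\<close>.\<close>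
  define s where "s = \<epsilon> / (2 * (norm v + 1))"
  have "0 < norm v + 1"
    by (simp add: add_nonneg_pos)
  then have "0 < s"
    using \<open>\<epsilon> > 0\<close> by (simp add: s_def)
  have "s * norm v \<le> s * (norm v + 1)"
    using \<open>0 < s\<close> by simp
  also have "\<dots> = \<epsilon> / 2"
    using \<open>0 < norm v + 1\<close> by (simp add: s_def field_simps)
  also have "\<dots> < \<epsilon>"
    using \<open>\<epsilon> > 0\<close> by simp
  finally have "g - s *\<^sub>R v \<in> ball g \<epsilon>"
    using \<open>0 < s\<close> by (simp add: dist_norm)
  moreover have "g - s *\<^sub>R v \<in> affine hull G"
    unfolding diff_conv_add_uminus using assms(3,5) rel_interior_subset
    by (intro add_span_diff_set_in_affine_hull span_neg span_mul) auto
  ultimately have "g - s *\<^sub>R v \<in> A"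
    using \<epsilon> assms(2) by blast
  moreover have weights: "1 / (1 + s) + s / (1 + s) = 1"
    using \<open>0 < s\<close> by (simp add: add_divide_distrib[symmetric])
  ultimately have "(1 / (1 + s)) *\<^sub>R (g - s *\<^sub>R v) + (s / (1 + s)) *\<^sub>R (g + v + w) \<in> A"
    using assms(1,4) \<open>0 < s\<close> by (intro convexD) auto
  moreover have "(1 / (1 + s)) *\<^sub>R (g - s *\<^sub>R v) + (s / (1 + s)) *\<^sub>R (g + v + w)
      = (1 / (1 + s) + s / (1 + s)) *\<^sub>R g + (s / (1 + s)) *\<^sub>R w"
    by (simp add: algebra_simps)
  ultimately have "g + (s / (1 + s)) *\<^sub>R w \<in> A"
    using weights by simp
  then show ?thesis
    using \<open>0 < s\<close> by (intro exI[of _ "s / (1 + s)"]) auto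
qed

lemma rel_interior_push_cone_into_convex:
  fixes A G :: "'a::euclidean_space set"
  assumes "convex A" "G \<subseteq> A" "g \<in> rel_interior G"
    and p: "g + v1 + e1 \<in> A" "g + v2 + e2 \<in> A" and v: "v1 \<in> span (diff_set G)" "v2 \<in> span (diff_set G)"
    and "0 \<le> \<alpha>" "0 \<le> \<beta>"
  shows "\<exists>\<delta>>0. g + \<delta> *\<^sub>R (\<alpha> *\<^sub>R e1 + \<beta> *\<^sub>R e2) \<in> A"
proof (cases "\<alpha> + \<beta> = 0")
  case True
  then have "\<alpha> = 0" "\<beta> = 0"
    using \<open>0 \<le> \<alpha>\<close> \<open>0 \<le> \<beta>\<close> by linarith+
  then show ?thesis
    using assms(2,3) rel_interior_subset by (intro exI[of _ 1]) auto
next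
  case False
  define s where "s = \<alpha> + \<beta>"
  have "0 < s"
    using False \<open>0 \<le> \<alpha>\<close> \<open>0 \<le> \<beta>\<close> by (simp add: s_def)
  have weights: "\<alpha> / s + \<beta> / s = 1"
    using \<open>0 < s\<close> by (simp add: s_def add_divide_distrib[symmetric])
  then have "(\<alpha> / s) *\<^sub>R (g + v1 + e1) + (\<beta> / s) *\<^sub>R (g + v2 + e2) \<in> A"
    using p \<open>0 \<le> \<alpha>\<close> \<open>0 \<le> \<beta>\<close> \<open>0 < s\<close> by (intro convexD[OF assms(1)]) simp_all
  moreover have "(\<alpha> / s) *\<^sub>R (g + v1 + e1) + (\<beta> / s) *\<^sub>R (g + v2 + e2)
      = (\<alpha> / s + \<beta> / s) *\<^sub>R g + ((\<alpha> / s) *\<^sub>R v1 + (\<beta> / s) *\<^sub>R v2) + (1 / s) *\<^sub>R (\<alpha> *\<^sub>R e1 + \<beta> *\<^sub>R e2)"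
    by (simp add: algebra_simps)
  ultimately have "g + ((\<alpha> / s) *\<^sub>R v1 + (\<beta> / s) *\<^sub>R v2) + (1 / s) *\<^sub>R (\<alpha> *\<^sub>R e1 + \<beta> *\<^sub>R e2) \<in> A"
    using weights by simp
  moreover have "(\<alpha> / s) *\<^sub>R v1 + (\<beta> / s) *\<^sub>R v2 \<in> span (diff_set G)"
    using v by (intro span_add span_mul)
  ultimately obtain \<delta> where "0 < \<delta>" "g + \<delta> *\<^sub>R ((1 / s) *\<^sub>R (\<alpha> *\<^sub>R e1 + \<beta> *\<^sub>R e2)) \<in> A"
    using rel_interior_push_into_convex[OF assms(1-3)] by blast
  then show ?thesis
    using \<open>0 < s\<close> by (intro exI[of _ "\<delta> / s"]) simp
qed

lemma negligible_msum_subspace: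
  fixes F U :: "'a::euclidean_space set"
  assumes "subspace U" "aff_dim F + int (dim U) < int DIM('a)"
  shows "negligible (msum F U)"
proof (cases "F = {}")
  case True
  then show ?thesis
    by (simp add: msum_def)
next
  case False
  then obtain f where "f \<in> F"
    by blast
  define X where "X = span ((\<lambda>x. x - f) ` F)"
  have "aff_dim F = int (dim X)"
    using aff_dim_eq_dim_subtract[OF hull_inc[OF \<open>f \<in> F\<close>]] by (simp add: X_def)
  moreover have "dim {x + y |x y. x \<in> X \<and> y \<in> U} + dim (X \<inter> U) = dim X + dim U"
    by (rule dim_sums_Int) (simp_all add: X_def assms(1))
  ultimately have "dim {x + y |x y. x \<in> X \<and> y \<in> U} < DIM('a)"
    using assms(2) by linarith
  then have "negligible ((+) f ` {x + y |x y. x \<in> X \<and> y \<in> U})"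
    by (intro negligible_translation negligible_lowdim)
  moreover have "msum F U \<subseteq> (+) f ` {x + y |x y. x \<in> X \<and> y \<in> U}"
  proof
    fix z
    assume "z \<in> msum F U"
    then obtain a u where "z = a + u" "a \<in> F" "u \<in> U"
      unfolding msum_def by blast
    moreover have "a - f \<in> X"
      unfolding X_def using \<open>a \<in> F\<close> by (intro span_base) auto
    ultimately show "z \<in> (+) f ` {x + y |x y. x \<in> X \<and> y \<in> U}"
      by (intro image_eqI[of _ _ "(a - f) + u"]) auto
  qed
  ultimately show ?thesis
    by (rule negligible_subset)
qed

lemma negligible_rel_frontier_plus_orthogonal_comp:
  fixes G :: "'a::euclidean_space set"
  assumes "polytope G"
  shows "negligible (msum (rel_frontier G) ((span (diff_set G))\<^sup>\<bottom>))"
proof (cases "G = {}")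
  case True
  then show ?thesis
    by (simp add: msum_def)
next
  case False
  define U where "U = (span (diff_set G))\<^sup>\<bottom>"
  have "negligible (msum F U)" if "F facet_of G" for F
    using that dim_orthogonal_comp_span_diff_set[OF False]
    by (intro negligible_msum_subspace) (auto simp: U_def subspace_orthogonal_comp facet_of_def)
  moreover have "finite {F. F facet_of G}"
    using finite_polytope_faces[OF assms] by (rule finite_subset[rotated]) (auto simp: facet_of_def)
  moreover have "msum (rel_frontier G) U = \<Union>((\<lambda>F. msum F U) ` {F. F facet_of G})"
    using assms by (auto simp: rel_frontier_of_polyhedron polytope_imp_polyhedron msum_def)
  ultimately show ?thesis
    unfolding U_def[symmetric] by (auto intro: negligible_Union)
qed

lemma orth_disc_eq:
  "orth_disc G r = {v \<in> (span (diff_set G))\<^sup>\<bottom>. norm v \<le> r}"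
  by (auto simp: orth_disc_def orthogonal_comp_def orthogonal_commute)

section \<open>The wedge neighbourhood of a subfacet\<close>

locale polytope_subfacet =
  fixes A G F1 F2 :: "'a::euclidean_space set" and a1 a2 :: 'a and b1 b2 :: real
  assumes polytope: "polytope A" and interior_nonempty: "interior A \<noteq> {}"
    and subfacet: "subfacet_of G A"
    and facets: "F1 facet_of A" "F2 facet_of A" "F1 \<noteq> F2"
    and G_subset: "G \<subseteq> F1" "G \<subseteq> F2"
    and normals: "a1 \<noteq> 0" "a2 \<noteq> 0"
    and supporting: "A \<subseteq> {x. a1 \<bullet> x \<le> b1}" "A \<subseteq> {x. a2 \<bullet> x \<le> b2}"
    and on_facets: "F1 \<subseteq> {x. a1 \<bullet> x = b1}" "F2 \<subseteq> {x. a2 \<bullet> x = b2}"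
begin

abbreviation parallel :: "'a set"
  where "parallel \<equiv> span (diff_set G)"

definition wedge :: "real \<Rightarrow> 'a set"
  where "wedge r = {w \<in> parallel\<^sup>\<bottom>. norm w \<le> r \<and> a1 \<bullet> w \<le> 0 \<and> a2 \<bullet> w \<le> 0}"

definition stretch :: "real \<Rightarrow> 'a \<Rightarrow> 'a"
  where "stretch \<delta> = normal_stretch parallel (SOME g. g \<in> G) \<delta>"

lemma convex_A: "convex A" and closed_A: "closed A"
  using polytope by (simp_all add: polytope_imp_convex polytope_imp_closed)

lemma G_face: "G face_of A" and G_nonempty: "G \<noteq> {}"
  using subfacet by (simp_all add: subfacet_of_def)

lemma G_subset_A: "G \<subseteq> A"
  using G_face by (rule face_of_imp_subset)

lemma polytope_G: "polytope G"
  using face_of_polytope_polytope[OF polytope G_face] .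

lemma compact_G: "compact G"
  using polytope_G by (rule polytope_imp_compact)

lemma aff_dim_G: "aff_dim G = int DIM('a) - 2"
  using subfacet aff_dim_nonempty_interior[OF interior_nonempty] by (simp add: subfacet_of_def)

lemma facet_eqs: "F1 = A \<inter> {x. a1 \<bullet> x = b1}" "F2 = A \<inter> {x. a2 \<bullet> x = b2}"
  using facet_eq_Int_supporting_hyperplane[OF convex_A interior_nonempty] facets normals supporting on_facets
  by blast+

lemma diff_in_parallel: "x \<in> G \<Longrightarrow> y \<in> G \<Longrightarrow> x - y \<in> parallel"
  by (auto simp: diff_set_def intro: span_base)

lemma msum_orth_disc_Int_halfspaces:
  "msum G (orth_disc G r) \<inter> {x. a1 \<bullet> x \<le> b1} \<inter> {x. a2 \<bullet> x \<le> b2} = msum G (wedge r)"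
proof -
  have "a1 \<bullet> g = b1" "a2 \<bullet> g = b2" if "g \<in> G" for g
    using that G_subset on_facets by auto
  then show ?thesis
    by (auto simp: msum_def wedge_def orth_disc_eq inner_add_right) blast
qed

lemma compact_wedge: "compact (wedge r)"
proof -
  have "wedge r = cball 0 r \<inter> parallel\<^sup>\<bottom> \<inter> {w. a1 \<bullet> w \<le> 0} \<inter> {w. a2 \<bullet> w \<le> 0}"
    by (auto simp: wedge_def)
  moreover have "closed (parallel\<^sup>\<bottom>)"
    by (simp add: closed_subspace subspace_orthogonal_comp)
  ultimately show ?thesis
    by (simp add: compact_Int_closed closed_halfspace_le)
qed

lemma compact_msum_wedge: "compact (msum G (wedge r))"
  unfolding msum_def by (intro compact_sums compact_G compact_wedge)

lemma stretch_add:
  assumes "g \<in> G" "w \<in> parallel\<^sup>\<bottom>"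
  shows "stretch \<delta> (g + w) = g + \<delta> *\<^sub>R w"
proof -
  define c where "c = (SOME g. g \<in> G)"
  have "c \<in> G"
    unfolding c_def using G_nonempty by (simp add: some_in_eq)
  have "stretch \<delta> (g + w) = normal_stretch parallel c \<delta> (c + (g - c) + w)"
    by (simp add: stretch_def c_def)
  also have "\<dots> = c + (g - c) + \<delta> *\<^sub>R w"
    by (rule normal_stretch_add[OF subspace_span diff_in_parallel[OF assms(1) \<open>c \<in> G\<close>] assms(2)])
  finally show ?thesis
    by simp
qed

lemma stretch_diff: "t \<in> parallel \<Longrightarrow> stretch \<delta> (x - t) = stretch \<delta> x - t"
  unfolding stretch_def by (rule normal_stretch_diff[OF subspace_span])

lemma scaleR_in_wedge_iff:
  assumes "0 < \<delta>"
  shows "\<delta> *\<^sub>R w \<in> wedge (\<delta> * r) \<longleftrightarrow> w \<in> wedge r"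
  using assms by (auto simp: wedge_def orthogonal_comp_def orthogonal_def mult_le_0_iff)

lemma stretch_msum_wedge:
  assumes "0 < \<delta>"
  shows "stretch \<delta> ` msum G (wedge 1) = msum G (wedge \<delta>)"
proof
  show "stretch \<delta> ` msum G (wedge 1) \<subseteq> msum G (wedge \<delta>)"
  proof
    fix z
    assume "z \<in> stretch \<delta> ` msum G (wedge 1)"
    then obtain g w where "z = stretch \<delta> (g + w)" "g \<in> G" "w \<in> wedge 1"
      unfolding msum_def by blast
    moreover have "\<delta> *\<^sub>R w \<in> wedge \<delta>"
      using scaleR_in_wedge_iff[OF assms, of w 1] \<open>w \<in> wedge 1\<close> by simp
    moreover have "stretch \<delta> (g + w) = g + \<delta> *\<^sub>R w"
      using \<open>g \<in> G\<close> \<open>w \<in> wedge 1\<close> by (simp add: stretch_add wedge_def)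
    ultimately show "z \<in> msum G (wedge \<delta>)"
      unfolding msum_def by blast
  qed
  show "msum G (wedge \<delta>) \<subseteq> stretch \<delta> ` msum G (wedge 1)"
  proof
    fix z
    assume "z \<in> msum G (wedge \<delta>)"
    then obtain g v where "z = g + v" "g \<in> G" "v \<in> wedge \<delta>"
      unfolding msum_def by blast
    moreover have "(1 / \<delta>) *\<^sub>R v \<in> wedge 1"
      using scaleR_in_wedge_iff[OF assms, of "(1 / \<delta>) *\<^sub>R v" 1] \<open>v \<in> wedge \<delta>\<close> assms by simp
    moreover have "stretch \<delta> (g + (1 / \<delta>) *\<^sub>R v) = g + v"
      using \<open>g \<in> G\<close> \<open>(1 / \<delta>) *\<^sub>R v \<in> wedge 1\<close> assms by (simp add: stretch_add wedge_def)
    ultimately show "z \<in> stretch \<delta> ` msum G (wedge 1)"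
      unfolding msum_def by (auto intro!: image_eqI[of _ _ "g + (1 / \<delta>) *\<^sub>R v"])
  qed
qed

lemma dim_orthogonal_comp_parallel: "dim (parallel\<^sup>\<bottom>) = 2"
  using dim_orthogonal_comp_span_diff_set[OF G_nonempty] aff_dim_G by simp

lemma wedge_direction_enters:
  assumes "g \<in> rel_interior G" "w \<in> wedge r"
  shows "\<exists>\<delta>>0. g + \<delta> *\<^sub>R w \<in> A"
proof -
  have "g \<in> G"
    using assms(1) rel_interior_subset by blast
  have w: "w \<in> parallel\<^sup>\<bottom>" "a1 \<bullet> w \<le> 0" "a2 \<bullet> w \<le> 0"
    using assms(2) by (simp_all add: wedge_def)
  obtain p1 v1 e1 where "p1 \<in> A" "v1 \<in> parallel" "e1 \<in> parallel\<^sup>\<bottom>" "p1 = g + v1 + e1"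
    "a2 \<bullet> e1 = 0" "a1 \<bullet> e1 < 0"
    using subfacet_edge_direction[OF subfacet facets(2,1) facets(3)[symmetric] G_subset(2,1)
        on_facets(2) supporting(1) facet_eqs(1) \<open>g \<in> G\<close>] .
  obtain p2 v2 e2 where "p2 \<in> A" "v2 \<in> parallel" "e2 \<in> parallel\<^sup>\<bottom>" "p2 = g + v2 + e2"
    "a1 \<bullet> e2 = 0" "a2 \<bullet> e2 < 0"
    using subfacet_edge_direction[OF subfacet facets G_subset on_facets(1) supporting(2) facet_eqs(2)
        \<open>g \<in> G\<close>] .
  obtain \<alpha> \<beta> where "0 \<le> \<alpha>" "0 \<le> \<beta>" "w = \<alpha> *\<^sub>R e2 + \<beta> *\<^sub>R e1"
    using planar_wedge_cone_decomp[OF dim_orthogonal_comp_parallel \<open>e2 \<in> parallel\<^sup>\<bottom>\<close>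
        \<open>e1 \<in> parallel\<^sup>\<bottom>\<close> w(1) \<open>a1 \<bullet> e2 = 0\<close> \<open>a2 \<bullet> e2 < 0\<close> \<open>a2 \<bullet> e1 = 0\<close> \<open>a1 \<bullet> e1 < 0\<close> w(2,3)] .
  then show ?thesis
    using rel_interior_push_cone_into_convex[OF convex_A G_subset_A assms(1)] \<open>p1 \<in> A\<close> \<open>p2 \<in> A\<close>
      \<open>p1 = g + v1 + e1\<close> \<open>p2 = g + v2 + e2\<close> \<open>v1 \<in> parallel\<close> \<open>v2 \<in> parallel\<close>
    by blast
qed

lemma stretch_in_A_antimono:
  assumes "z \<in> msum G (wedge 1)" "stretch \<delta> z \<in> A" "0 < \<delta>'" "\<delta>' \<le> \<delta>"
  shows "stretch \<delta>' z \<in> A"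
proof -
  obtain g w where "z = g + w" "g \<in> G" "w \<in> parallel\<^sup>\<bottom>"
    using assms(1) by (auto simp: msum_def wedge_def)
  then have stretch: "stretch d z = g + d *\<^sub>R w" for d
    by (simp add: stretch_add)
  have "(1 - \<delta>' / \<delta>) *\<^sub>R g + (\<delta>' / \<delta>) *\<^sub>R stretch \<delta> z \<in> A"
    using assms \<open>g \<in> G\<close> G_subset_A by (intro convexD[OF convex_A]) auto
  then show ?thesis
    using assms(3,4) by (simp add: stretch algebra_simps)
qed

lemma eventually_stretch_in_A:
  assumes "z \<in> msum G (wedge 1)" "z \<notin> msum (rel_frontier G) (wedge 1)"
  shows "\<forall>\<^sub>F \<delta> in at_right 0. stretch \<delta> z \<in> A"
proof -
  obtain g w where z: "z = g + w" "g \<in> G" "w \<in> wedge 1"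
    using assms(1) by (auto simp: msum_def)
  then have "g \<notin> rel_frontier G"
    using assms(2) by (auto simp: msum_def)
  then have "g \<in> rel_interior G"
    using z(2) compact_G by (simp add: rel_frontier_def compact_imp_closed)
  then obtain \<delta> where "0 < \<delta>" "g + \<delta> *\<^sub>R w \<in> A"
    using wedge_direction_enters z(3) by blast
  moreover have "stretch \<delta> z = g + \<delta> *\<^sub>R w"
    using z by (simp add: wedge_def stretch_add)
  ultimately have "0 < \<delta>" "stretch \<delta> z \<in> A"
    by simp_all
  then show ?thesis
    unfolding eventually_at_right_field using stretch_in_A_antimono[OF assms(1)] by force
qed

lemma null_sets_msum_rel_frontier_wedge:
  "msum (rel_frontier G) (wedge 1) \<in> null_sets lborel"
proof -
  have "msum (rel_frontier G) (wedge 1) \<subseteq> msum (rel_frontier G) (parallel\<^sup>\<bottom>)"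
    by (auto simp: msum_def wedge_def)
  then have "negligible (msum (rel_frontier G) (wedge 1))"
    using negligible_rel_frontier_plus_orthogonal_comp[OF polytope_G] negligible_subset by blast
  moreover have "compact (msum (rel_frontier G) (wedge 1))"
    unfolding msum_def using compact_G by (intro compact_sums compact_rel_frontier compact_wedge)
  ultimately show ?thesis
    by (simp add: negligible_iff_null_sets null_sets_completion_iff borel_compact)
qed

lemma emeasure_stretch_image:
  assumes "0 < \<delta>"
  obtains k where "\<And>S. S \<in> sets borel \<Longrightarrow> stretch \<delta> ` S \<in> sets borel"
    "\<And>S. S \<in> sets borel \<Longrightarrow> emeasure lborel (stretch \<delta> ` S) = k * emeasure lborel S"
proof -
  have \<delta>: "\<delta> \<noteq> 0" "1 / \<delta> \<noteq> 0"
    using assms by simp_all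
  have image: "stretch \<delta> ` S = normal_stretch parallel (SOME g. g \<in> G) (1 / \<delta>) -` S" for S
    unfolding stretch_def using \<delta>(1) by (rule normal_stretch_image_eq_vimage[OF subspace_span])
  obtain k where "\<And>S. S \<in> sets borel \<Longrightarrow> normal_stretch parallel (SOME g. g \<in> G) (1 / \<delta>) -` S \<in> sets borel"
    "\<And>S. S \<in> sets borel \<Longrightarrow> emeasure lborel (normal_stretch parallel (SOME g. g \<in> G) (1 / \<delta>) -` S) = k * emeasure lborel S"
    using emeasure_normal_stretch_vimage[OF subspace_span \<delta>(2)] by blast
  then show ?thesis
    using that unfolding image by simp
qed

definition escaping :: "real \<Rightarrow> 'a set"
  where "escaping \<delta> = msum G (wedge 1) - {z. stretch \<delta> z \<in> A}"

lemma continuous_stretch: "continuous_on UNIV (stretch \<delta>)"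
  unfolding stretch_def by (rule continuous_normal_stretch[OF subspace_span])

lemma escaping_in_sets: "escaping \<delta> \<in> sets borel"
proof -
  have "closed (stretch \<delta> -` A)"
    using continuous_on_closed_vimage[of UNIV "stretch \<delta>"] continuous_stretch closed_A by simp
  then have "closed {z. stretch \<delta> z \<in> A}"
    by (simp add: vimage_def)
  then show ?thesis
    unfolding escaping_def using compact_msum_wedge
    by (intro sets.Diff borel_compact borel_closed) auto
qed

lemma escaping_antimono: "0 < \<delta>' \<Longrightarrow> \<delta>' \<le> \<delta> \<Longrightarrow> escaping \<delta>' \<subseteq> escaping \<delta>"
  using stretch_in_A_antimono by (auto simp: escaping_def)

lemma Inter_escaping_subset: "(\<Inter>\<delta>\<in>{0<..}. escaping \<delta>) \<subseteq> msum (rel_frontier G) (wedge 1)"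
proof
  fix z
  assume z: "z \<in> (\<Inter>\<delta>\<in>{0<..}. escaping \<delta>)"
  show "z \<in> msum (rel_frontier G) (wedge 1)"
  proof (rule ccontr)
    assume "z \<notin> msum (rel_frontier G) (wedge 1)"
    moreover have "z \<in> msum G (wedge 1)"
      using z by (auto simp: escaping_def)
    ultimately have "\<forall>\<^sub>F \<delta> in at_right 0. stretch \<delta> z \<in> A \<and> 0 < \<delta>"
      by (intro eventually_conj eventually_stretch_in_A) (simp_all add: eventually_at_right_less)
    then have "\<forall>\<^sub>F \<delta> in at_right (0::real). False"
      by eventually_elim (use z in \<open>auto simp: escaping_def\<close>)
    then show False
      by (simp add: trivial_limit_at_right_real)
  qed
qed

lemma conv_ind_le_escaping:
  assumes "finite_measure \<mu>" "sets \<mu> = sets borel" "g \<in> G" "w \<in> wedge 1"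
  shows "conv_ind G \<mu> g \<le> conv_ind A \<mu> (stretch \<delta> (g + w)) + measure \<mu> {t. g + w - t \<in> escaping \<delta>}"
proof -
  interpret finite_measure \<mu>
    by (rule assms(1))
  have "{t. g - t \<in> G} \<subseteq> {t. stretch \<delta> (g + w) - t \<in> A} \<union> {t. g + w - t \<in> escaping \<delta>}"
  proof
    fix t
    assume "t \<in> {t. g - t \<in> G}"
    then have "g - t \<in> G" "t \<in> parallel"
      using diff_in_parallel[OF assms(3), of "g - t"] by auto
    moreover have "g + w - t = (g - t) + w"
      by simp
    ultimately have "g + w - t \<in> msum G (wedge 1)"
      using assms(4) unfolding msum_def by blast
    moreover have "stretch \<delta> (g + w - t) = stretch \<delta> (g + w) - t"
      using stretch_diff \<open>t \<in> parallel\<close> by blast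
    ultimately show "t \<in> {t. stretch \<delta> (g + w) - t \<in> A} \<union> {t. g + w - t \<in> escaping \<delta>}"
      by (auto simp: escaping_def)
  qed
  moreover have sets: "{t. g - t \<in> G} \<in> sets \<mu>" "{t. stretch \<delta> (g + w) - t \<in> A} \<in> sets \<mu>"
    "{t. g + w - t \<in> escaping \<delta>} \<in> sets \<mu>"
    using compact_G closed_A escaping_in_sets
    by (auto intro!: translate_vimage_in_sets[OF assms(2)] simp: borel_compact borel_closed)
  ultimately have "measure \<mu> {t. g - t \<in> G}
      \<le> measure \<mu> ({t. stretch \<delta> (g + w) - t \<in> A} \<union> {t. g + w - t \<in> escaping \<delta>})"
    by (intro finite_measure_mono) auto
  also have "\<dots> \<le> measure \<mu> {t. stretch \<delta> (g + w) - t \<in> A} + measure \<mu> {t. g + w - t \<in> escaping \<delta>}"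
    using sets by (intro measure_subadditive) (auto simp: emeasure_real)
  finally show ?thesis
    by (simp add: conv_ind_def)
qed

definition bad_set :: "'a measure \<Rightarrow> real \<Rightarrow> 'a set \<Rightarrow> real \<Rightarrow> 'a set"
  where "bad_set \<mu> \<eta> N \<delta> = msum G (wedge 1) \<inter> (N \<union> {z. \<eta> < measure \<mu> {t. z - t \<in> escaping \<delta>}})"

lemma bad_set_in_sets:
  assumes "finite_measure \<mu>" "sets \<mu> = sets borel" "N \<in> sets borel"
  shows "bad_set \<mu> \<eta> N \<delta> \<in> sets borel"
proof -
  have "(\<lambda>z. emeasure \<mu> {t. z - t \<in> escaping \<delta>}) \<in> borel_measurable borel"
    using finite_measure.axioms(1)[OF assms(1)] assms(2) escaping_in_sets
    by (rule borel_measurable_emeasure_translate_vimage)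
  then have [measurable]: "(\<lambda>z. measure \<mu> {t. z - t \<in> escaping \<delta>}) \<in> borel_measurable borel"
    unfolding measure_def by measurable
  have [measurable]: "msum G (wedge 1) \<in> sets borel" "N \<in> sets borel"
    using compact_msum_wedge assms(3) by (simp_all add: borel_compact)
  show ?thesis
    unfolding bad_set_def by measurable
qed

lemma bad_set_antimono:
  assumes "finite_measure \<mu>" "sets \<mu> = sets borel" "0 < \<delta>'" "\<delta>' \<le> \<delta>"
  shows "bad_set \<mu> \<eta> N \<delta>' \<subseteq> bad_set \<mu> \<eta> N \<delta>"
proof -
  have "measure \<mu> {t. z - t \<in> escaping \<delta>'} \<le> measure \<mu> {t. z - t \<in> escaping \<delta>}" for z
    using escaping_antimono[OF assms(3,4)] escaping_in_sets
    by (intro finite_measure.finite_measure_mono[OF assms(1)] translate_vimage_in_sets[OF assms(2)]) auto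
  then show ?thesis
    unfolding bad_set_def by (auto intro: less_le_trans)
qed

lemma emeasure_bad_set_tendsto_0:
  assumes "finite_measure \<mu>" "sets \<mu> = sets borel" "N \<in> null_sets lborel" "0 < \<eta>"
  shows "((\<lambda>\<delta>. emeasure lborel (bad_set \<mu> \<eta> N \<delta>)) \<longlongrightarrow> 0) (at_right 0)"
proof -
  have N: "N \<in> sets borel"
    using assms(3) by (simp add: null_sets_def)
  have "AE z in lborel. \<forall>\<^sub>F \<delta> in at_right 0. measure \<mu> {t. z - t \<in> escaping \<delta>} < \<eta>"
    by (rule AE_eventually_translate_measure_less[OF assms(1,2) escaping_in_sets escaping_antimono
          null_sets_msum_rel_frontier_wedge Inter_escaping_subset assms(4)])
  then have "AE z in lborel. z \<notin> (\<Inter>\<delta>\<in>{0<..}. bad_set \<mu> \<eta> N \<delta>)"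
    using AE_not_in[OF assms(3)]
  proof eventually_elim
    case (elim z)
    then have "\<forall>\<^sub>F \<delta> in at_right 0. z \<notin> bad_set \<mu> \<eta> N \<delta>"
      by (auto simp: bad_set_def elim!: eventually_mono)
    moreover have "\<forall>\<^sub>F \<delta> in at_right (0::real). 0 < \<delta>"
      by (simp add: eventually_at_right_less)
    ultimately obtain \<delta> :: real where "0 < \<delta>" "z \<notin> bad_set \<mu> \<eta> N \<delta>"
      using eventually_happens'[OF trivial_limit_at_right_real] eventually_conj by blast
    then show ?case
      by blast
  qed
  then obtain N' where N': "{z \<in> space lborel. \<not> z \<notin> (\<Inter>\<delta>\<in>{0<..}. bad_set \<mu> \<eta> N \<delta>)} \<subseteq> N'"
    "emeasure lborel N' = 0" "N' \<in> sets lborel"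
    by (rule AE_E)
  then have "emeasure lborel (\<Inter>\<delta>\<in>{0<..}. bad_set \<mu> \<eta> N \<delta>) = 0"
    by (intro emeasure_eq_0[OF N'(3,2)]) auto
  moreover have "((\<lambda>\<delta>. emeasure lborel (bad_set \<mu> \<eta> N \<delta>)) \<longlongrightarrow> emeasure lborel (\<Inter>\<delta>\<in>{0<..}. bad_set \<mu> \<eta> N \<delta>)) (at_right 0)"
  proof (rule tendsto_emeasure_antimono_at_right_0)
    show "emeasure lborel (bad_set \<mu> \<eta> N \<delta>) \<noteq> \<infinity>" for \<delta>
      using emeasure_mono[of "bad_set \<mu> \<eta> N \<delta>" "msum G (wedge 1)" lborel]
        emeasure_compact_finite[OF compact_msum_wedge[of 1]] compact_msum_wedge[of 1]
      by (auto simp: bad_set_def borel_compact top.not_eq_extremum)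
  qed (use bad_set_in_sets[OF assms(1,2) N] bad_set_antimono[OF assms(1,2)] in auto)
  ultimately show ?thesis
    by simp
qed

lemma low_density_subset_stretch_bad_set:
  assumes "finite_measure \<mu>" "sets \<mu> = sets borel"
    and "msum {x \<in> G. conv_ind G \<mu> x < 1} (orth_disc G 1) \<subseteq> N" "0 < \<delta>"
  shows "{x \<in> msum G (wedge \<delta>). conv_ind A \<mu> x < 1 - \<eta>} \<subseteq> stretch \<delta> ` bad_set \<mu> \<eta> N \<delta>"
proof
  fix x
  assume x: "x \<in> {x \<in> msum G (wedge \<delta>). conv_ind A \<mu> x < 1 - \<eta>}"
  then have "x \<in> stretch \<delta> ` msum G (wedge 1)"
    using stretch_msum_wedge[OF assms(4)] by simp
  then obtain g w where z: "x = stretch \<delta> (g + w)" "g \<in> G" "w \<in> wedge 1"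
    unfolding msum_def by blast
  have "g + w \<in> bad_set \<mu> \<eta> N \<delta>"
  proof (rule ccontr)
    assume "g + w \<notin> bad_set \<mu> \<eta> N \<delta>"
    then have "g + w \<notin> N" and escaping: "measure \<mu> {t. g + w - t \<in> escaping \<delta>} \<le> \<eta>"
      using z(2,3) by (auto simp: bad_set_def msum_def)
    have "w \<in> orth_disc G 1"
      using z(3) by (simp add: wedge_def orth_disc_eq)
    have "1 \<le> conv_ind G \<mu> g"
    proof (rule ccontr)
      assume "\<not> 1 \<le> conv_ind G \<mu> g"
      then have "g + w \<in> msum {x \<in> G. conv_ind G \<mu> x < 1} (orth_disc G 1)"
        using z(2) \<open>w \<in> orth_disc G 1\<close> unfolding msum_def not_le by blast
      then show False
        using assms(3) \<open>g + w \<notin> N\<close> by blast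
    qed
    then show False
      using conv_ind_le_escaping[OF assms(1,2) z(2,3), of \<delta>] escaping x z(1) by simp
  qed
  then show "x \<in> stretch \<delta> ` bad_set \<mu> \<eta> N \<delta>"
    using z(1) by blast
qed

lemma measure_low_density_small_o:
  assumes "finite_measure \<mu>" "sets \<mu> = sets borel"
    and "flat_null G {x \<in> G. conv_ind G \<mu> x < 1}" "0 < \<eta>"
  shows "(\<lambda>\<delta>. measure lebesgue {x \<in> msum G (wedge \<delta>). conv_ind A \<mu> x < 1 - \<eta>})
           \<in> o[at_right 0](\<lambda>\<delta>. measure lebesgue (msum G (wedge \<delta>)))"
proof -
  obtain N where N: "N \<in> null_sets lborel" "msum {x \<in> G. conv_ind G \<mu> x < 1} (orth_disc G 1) \<subseteq> N"
    using assms(3) by (auto simp: flat_null_def null_sets_completion_iff2)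
  show ?thesis
  proof (rule small_o_measure_image_of_vanishing)
    show "msum G (wedge 1) \<in> sets borel"
      using compact_msum_wedge by (rule borel_compact)
    show "emeasure lborel (msum G (wedge \<delta>)) \<noteq> \<infinity>" for \<delta>
      using emeasure_compact_finite[OF compact_msum_wedge, of \<delta>] by (simp add: less_imp_neq)
    show "msum G (wedge \<delta>) = stretch \<delta> ` msum G (wedge 1)" if "0 < \<delta>" for \<delta>
      using stretch_msum_wedge[OF that] by simp
    show "\<exists>k. \<forall>S\<in>sets borel. stretch \<delta> ` S \<in> sets borel \<and> emeasure lborel (stretch \<delta> ` S) = k * emeasure lborel S"
      if "0 < \<delta>" for \<delta>
      using emeasure_stretch_image[OF that] by metis
    show "bad_set \<mu> \<eta> N \<delta> \<in> sets borel" for \<delta>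
      using N(1) by (intro bad_set_in_sets[OF assms(1,2)]) (simp add: null_sets_def)
    show "bad_set \<mu> \<eta> N \<delta> \<subseteq> msum G (wedge 1)" for \<delta>
      by (auto simp: bad_set_def)
  qed (use emeasure_bad_set_tendsto_0[OF assms(1,2) N(1) assms(4)]
        low_density_subset_stretch_bad_set[OF assms(1,2) N(2)] in auto)
qed

end

theorem lemma5p9:
  fixes A G F1 F2 H1 H2 :: "'a::euclidean_space set" and \<mu> :: "'a measure"
  assumes "polytope A" and "interior A \<noteq> {}"
    and "subfacet_of G A"
    and "F1 facet_of A" and "F2 facet_of A" and "F1 \<noteq> F2"
    and "G \<subseteq> F1" and "G \<subseteq> F2"
    and "support_halfspace_at A F1 H1" and "support_halfspace_at A F2 H2"
    and "finite_measure \<mu>" and "sets \<mu> = sets borel"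
    and "emeasure \<mu> (UNIV - diff_set G) = 0"
    and "flat_null G {x \<in> G. conv_ind G \<mu> x < 1}"
    and "\<eta> > 0"
  shows "(\<lambda>\<delta>. measure lebesgue {x \<in> msum G (orth_disc G \<delta>) \<inter> H1 \<inter> H2. conv_ind A \<mu> x < 1 - \<eta>})
           \<in> o[at_right 0](\<lambda>\<delta>. measure lebesgue (msum G (orth_disc G \<delta>) \<inter> H1 \<inter> H2))"
proof -
  obtain a1 b1 where a1: "a1 \<noteq> 0" "H1 = {x. a1 \<bullet> x \<le> b1}" "A \<subseteq> H1" "F1 \<subseteq> {x. a1 \<bullet> x = b1}"
    using assms(9) unfolding support_halfspace_at_def by blast
  obtain a2 b2 where a2: "a2 \<noteq> 0" "H2 = {x. a2 \<bullet> x \<le> b2}" "A \<subseteq> H2" "F2 \<subseteq> {x. a2 \<bullet> x = b2}"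
    using assms(10) unfolding support_halfspace_at_def by blast
  interpret polytope_subfacet A G F1 F2 a1 a2 b1 b2
    using assms(1-8) a1 a2 by unfold_locales auto
  have "msum G (orth_disc G \<delta>) \<inter> H1 \<inter> H2 = msum G (wedge \<delta>)" for \<delta>
    using msum_orth_disc_Int_halfspaces a1(2) a2(2) by simp
  then show ?thesis
    using measure_low_density_small_o[OF assms(11,12,14,15)] by simp
qed

end
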